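(* Let $\bm\sigma=\sigma_1\bm e_1+\dots+\sigma_r\bm e_r\in\mathbb{Z}^r$ be a changemaker vector with $\sigma_r\ge 3$ and $n=\bm\sigma\cdot\bm\sigma$, and let $L=\langle\bm\sigma\rangle^\perp\subseteq\mathbb{Z}^r$ be the corresponding $n$-changemaker lattice. If $L$ admits an obtuse superbase, then \[ n\le 4+\frac32\sum_{i=1}^r\sigma_i(\sigma_i-1). \]
   Context: $\mathbb{Z}^r$ carries the standard Euclidean pairing with orthonormal basis $\bm e_1,\dots,\bm e_r$. A changemaker vector is $\bm\sigma=\sum\sigma_i\bm e_i$ with $\sigma_1=1$ and $\sigma_{i-1}\le\sigma_i\le 1+\sigma_1+\dots+\sigma_{i-1}$ for $i=2,\dots,r$. For an integral lattice $L$ of rank $k$ (free abelian group with symmetric positive definite integral bilinear form), an obtuse superbase is a set $\{v_0,\dots,v_k\}\subseteq L$ that spans $L$, satisfies $v_i\cdot v_j\le0$ for $i\ne j$, and $v_0+\dots+v_k=0$. *)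

theory Defs
  imports Complex_Main
begin

text \<open>Vectors of the integer lattice Z^r are modelled as functions nat => int
  supported on the coordinates 1..r (coordinate i is the coefficient of e_i).\<close>

definition zvec :: "nat \<Rightarrow> (nat \<Rightarrow> int) set" where
  "zvec r = {x. \<forall>i. (i < 1 \<or> r < i) \<longrightarrow> x i = 0}"

definition dot :: "nat \<Rightarrow> (nat \<Rightarrow> int) \<Rightarrow> (nat \<Rightarrow> int) \<Rightarrow> int" where
  "dot r x y = (\<Sum>i=1..r. x i * y i)"

definition changemaker :: "nat \<Rightarrow> (nat \<Rightarrow> int) \<Rightarrow> bool" where
  "changemaker r \<sigma> \<longleftrightarrow> 1 \<le> r \<and> \<sigma> \<in> zvec r \<and> \<sigma> 1 = 1 \<and>
     (\<forall>i\<in>{2..r}. \<sigma> (i - 1) \<le> \<sigma> i \<and> \<sigma> i \<le> 1 + (\<Sum>j=1..i-1. \<sigma> j))"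

definition cm_lattice :: "nat \<Rightarrow> (nat \<Rightarrow> int) \<Rightarrow> (nat \<Rightarrow> int) set" where
  "cm_lattice r \<sigma> = {x \<in> zvec r. dot r x \<sigma> = 0}"

definition int_span :: "nat set \<Rightarrow> (nat \<Rightarrow> nat \<Rightarrow> int) \<Rightarrow> (nat \<Rightarrow> int) set" where
  "int_span I v = {x. \<exists>c::nat \<Rightarrow> int. x = (\<lambda>j. \<Sum>i\<in>I. c i * v i j)}"

definition lattice_rank :: "(nat \<Rightarrow> int) set \<Rightarrow> nat \<Rightarrow> bool" where
  "lattice_rank L k \<longleftrightarrow> (\<exists>b::nat \<Rightarrow> nat \<Rightarrow> int.
      int_span {..<k} b = L \<and>
      (\<forall>c::nat \<Rightarrow> int. (\<lambda>j. \<Sum>i<k. c i * b i j) = (\<lambda>_. 0) \<longrightarrow> (\<forall>i<k. c i = 0)))"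

definition obtuse_superbase ::
    "nat \<Rightarrow> (nat \<Rightarrow> int) set \<Rightarrow> nat \<Rightarrow> (nat \<Rightarrow> nat \<Rightarrow> int) \<Rightarrow> bool" where
  "obtuse_superbase r L k v \<longleftrightarrow>
     (\<forall>i\<le>k. v i \<in> L) \<and> int_span {..k} v = L \<and>
     (\<forall>i\<le>k. \<forall>j\<le>k. i \<noteq> j \<longrightarrow> dot r (v i) (v j) \<le> 0) \<and>
     (\<lambda>j. \<Sum>i\<le>k. v i j) = (\<lambda>_. 0)"

definition admits_obtuse_superbase :: "nat \<Rightarrow> (nat \<Rightarrow> int) set \<Rightarrow> bool" where
  "admits_obtuse_superbase r L \<longleftrightarrow>
     (\<exists>k v. lattice_rank L k \<and> obtuse_superbase r L k v)"

end

theory Submission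
  imports Defs
begin

(*
  Write vectors of L in terms of the obtuse superbase v_0, ..., v_k. Since the v_i sum to zero,
  Selling's formula 2 |sum f_i v_i|^2 = sum_{i,i'} (-v_i.v_i') (f_i - f_i')^2 holds, so reducing
  the coefficients f_i mod 2 gives representatives of the classes of L/2L with twice the norm a cut
  function c of the parity pattern of f. As c(a+b) + c(a+c) + c(b+c) <= c(a) + c(b) + c(c) +
  c(a+b+c), for x, y, z, w in L with w = x + y + z mod 2L there are u_1, u_2, u_3 in L congruent
  to x + y, x + z, y + z mod 2L with |u_1|^2 + |u_2|^2 + |u_3|^2 <= |x|^2 + |y|^2 + |z|^2 + |w|^2.

  A vector of L whose odd coordinates form the set P has norm at least |P|, and at least |P| + 3
  unless some choice of signs makes sum_{j in P} +-sigma_j vanish.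

  The claimed bound is equivalent to sum_i sigma_i (3 - sigma_i) <= 8, which follows from
  2 a + 2 b + sigma_r (3 - sigma_r) <= 8 for the numbers a and b of coefficients 1 and 2. If the
  latter failed, some coefficients 1, 2 and sigma_r would form one of four configurations in which
  vectors x, y, z, w built from +-e_i violate the inequality above.
*)

section \<open>Obtuse superbases and reduction modulo 2\<close>

definition lincomb :: "nat set \<Rightarrow> (nat \<Rightarrow> int) \<Rightarrow> (nat \<Rightarrow> nat \<Rightarrow> int) \<Rightarrow> nat \<Rightarrow> int" where
  "lincomb K a v = (\<lambda>j. \<Sum>i\<in>K. a i * v i j)"

lemma int_span_iff_lincomb: "x \<in> int_span K v \<longleftrightarrow> (\<exists>a. x = lincomb K a v)"
  unfolding int_span_def lincomb_def by blast

lemma even_lincomb: "(\<And>i. i \<in> K \<Longrightarrow> even (a i)) \<Longrightarrow> even (lincomb K a v j)"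
  unfolding lincomb_def by (auto intro: dvd_sum)

lemma dot_commute: "dot r x y = dot r y x"
  unfolding dot_def by (simp add: mult.commute)

lemma dot_lincomb:
  "dot r (lincomb K a v) (lincomb K b v) = (\<Sum>i\<in>K. \<Sum>i'\<in>K. a i * b i' * dot r (v i) (v i'))"
proof -
  have "dot r (lincomb K a v) (lincomb K b v) = (\<Sum>j=1..r. \<Sum>i\<in>K. \<Sum>i'\<in>K. a i * b i' * (v i j * v i' j))"
    unfolding dot_def lincomb_def by (simp add: sum_product mult_ac)
  also have "\<dots> = (\<Sum>i\<in>K. \<Sum>i'\<in>K. \<Sum>j=1..r. a i * b i' * (v i j * v i' j))"
    by (subst sum.swap) (rule sum.cong[OF refl], rule sum.swap)
  also have "\<dots> = (\<Sum>i\<in>K. \<Sum>i'\<in>K. a i * b i' * dot r (v i) (v i'))"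
    by (simp add: dot_def sum_distrib_left)
  finally show ?thesis .
qed

lemma sum_dot_zero_sum_family:
  assumes "(\<lambda>j. \<Sum>i\<in>K. v i j) = (\<lambda>_. 0)"
  shows "(\<Sum>i'\<in>K. dot r (v i) (v i')) = 0"
proof -
  have "(\<Sum>i'\<in>K. dot r (v i) (v i')) = (\<Sum>j=1..r. v i j * (\<Sum>i'\<in>K. v i' j))"
    unfolding dot_def by (simp add: sum_distrib_left sum.swap[of _ K])
  also have "\<dots> = 0" using fun_cong[OF assms] by simp
  finally show ?thesis .
qed

lemma selling_formula:
  assumes zero_sum: "(\<lambda>j. \<Sum>i\<in>K. v i j) = (\<lambda>_. 0)"
  shows "2 * dot r (lincomb K f v) (lincomb K f v) =
    (\<Sum>i\<in>K. \<Sum>i'\<in>K. - dot r (v i) (v i') * (f i - f i')\<^sup>2)"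
proof -
  let ?G = "\<lambda>i i'. dot r (v i) (v i')"
  have expand: "?G i i' * (f i - f i')\<^sup>2
      = (f i)\<^sup>2 * ?G i i' + (f i')\<^sup>2 * ?G i' i - 2 * (f i * f i' * ?G i i')" for i i'
    by (simp add: power2_eq_square algebra_simps dot_commute[of r "v i'"])
  have rows: "(\<Sum>i\<in>K. \<Sum>i'\<in>K. (f i)\<^sup>2 * ?G i i') = 0"
    using sum_dot_zero_sum_family[OF zero_sum] by (simp add: sum_distrib_left[symmetric])
  then have columns: "(\<Sum>i\<in>K. \<Sum>i'\<in>K. (f i')\<^sup>2 * ?G i' i) = 0"
    by (subst sum.swap) simp
  have "(\<Sum>i\<in>K. \<Sum>i'\<in>K. ?G i i' * (f i - f i')\<^sup>2) = - 2 * (\<Sum>i\<in>K. \<Sum>i'\<in>K. f i * f i' * ?G i i')"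
    using rows columns by (simp add: expand sum.distrib sum_subtractf sum_distrib_left sum_negf)
  then show ?thesis by (simp add: dot_lincomb sum_negf)
qed

definition parity_cut :: "nat \<Rightarrow> nat set \<Rightarrow> (nat \<Rightarrow> nat \<Rightarrow> int) \<Rightarrow> (nat \<Rightarrow> int) \<Rightarrow> int" where
  "parity_cut r K v f = (\<Sum>i\<in>K. \<Sum>i'\<in>K. - dot r (v i) (v i') * of_bool (odd (f i - f i')))"

lemma of_bool_odd_le_power2: "of_bool (odd x) \<le> (x::int)\<^sup>2"
proof (cases "x = 0")
  case False
  then have "1 \<le> x\<^sup>2" by (simp add: int_one_le_iff_zero_less)
  then show ?thesis by simp
qed simp

lemma parity_cut_le_dot:
  assumes zero_sum: "(\<lambda>j. \<Sum>i\<in>K. v i j) = (\<lambda>_. 0)"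
    and obtuse: "\<forall>i\<in>K. \<forall>i'\<in>K. i \<noteq> i' \<longrightarrow> dot r (v i) (v i') \<le> 0"
  shows "parity_cut r K v f \<le> 2 * dot r (lincomb K f v) (lincomb K f v)"
  unfolding selling_formula[OF zero_sum] parity_cut_def
proof (intro sum_mono)
  fix i i' assume "i \<in> K" "i' \<in> K"
  show "- dot r (v i) (v i') * of_bool (odd (f i - f i')) \<le> - dot r (v i) (v i') * (f i - f i')\<^sup>2"
  proof (cases "i = i'")
    case False
    then have "0 \<le> - dot r (v i) (v i')" using obtuse \<open>i \<in> K\<close> \<open>i' \<in> K\<close> by auto
    then show ?thesis by (rule mult_left_mono[OF of_bool_odd_le_power2])
  qed simp
qed

lemma power2_mod_2_diff: "((a::int) mod 2 - b mod 2)\<^sup>2 = of_bool (odd (a - b))"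
  by (simp add: mod2_eq_if)

lemma dot_lincomb_mod_2:
  assumes "(\<lambda>j. \<Sum>i\<in>K. v i j) = (\<lambda>_. 0)"
  shows "2 * dot r (lincomb K (\<lambda>i. f i mod 2) v) (lincomb K (\<lambda>i. f i mod 2) v) = parity_cut r K v f"
  unfolding selling_formula[OF assms] parity_cut_def by (simp add: power2_mod_2_diff)

lemma parity_cut_add_even: "parity_cut r K v (\<lambda>i. f i + 2 * d i) = parity_cut r K v f"
proof -
  have "odd (f i + 2 * d i - (f i' + 2 * d i')) \<longleftrightarrow> odd (f i - f i')" for i i'
    by (simp add: algebra_simps)
  then show ?thesis unfolding parity_cut_def by presburger
qed

lemma of_bool_xor_le:
  "of_bool (P \<noteq> Q) + of_bool (P \<noteq> S) + of_bool (Q \<noteq> S)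
     \<le> of_bool P + of_bool Q + of_bool S + (of_bool (P \<noteq> (Q \<noteq> S)) :: int)"
  by (cases P; cases Q; cases S) simp_all

lemma parity_cut_triple:
  assumes obtuse: "\<forall>i\<in>K. \<forall>i'\<in>K. i \<noteq> i' \<longrightarrow> dot r (v i) (v i') \<le> 0"
  shows "parity_cut r K v (\<lambda>i. a i + b i) + parity_cut r K v (\<lambda>i. a i + c i) + parity_cut r K v (\<lambda>i. b i + c i)
    \<le> parity_cut r K v a + parity_cut r K v b + parity_cut r K v c + parity_cut r K v (\<lambda>i. a i + b i + c i)"
proof -
  let ?w = "\<lambda>i i'. - dot r (v i) (v i')"
  let ?odd = "\<lambda>f i i'. of_bool (odd (f i - f i')) :: int"
  have "?w i i' * (?odd (\<lambda>i. a i + b i) i i' + ?odd (\<lambda>i. a i + c i) i i' + ?odd (\<lambda>i. b i + c i) i i')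
     \<le> ?w i i' * (?odd a i i' + ?odd b i i' + ?odd c i i' + ?odd (\<lambda>i. a i + b i + c i) i i')"
    if "i \<in> K" "i' \<in> K" for i i'
  proof (cases "i = i'")
    case False
    then have "0 \<le> ?w i i'" using obtuse that by auto
    moreover have "odd (x + y - (x' + y')) \<longleftrightarrow> odd (x - x') \<noteq> odd (y - y')" for x y x' y' :: int
      by auto
    moreover have "odd (x + y + z - (x' + y' + z')) \<longleftrightarrow> odd (x - x') \<noteq> (odd (y - y') \<noteq> odd (z - z'))"
      for x y z x' y' z' :: int
      by auto
    ultimately show ?thesis
      using of_bool_xor_le[of "odd (a i - a i')" "odd (b i - b i')" "odd (c i - c i')"]
      by (simp add: mult_left_mono)
  qed simp
  then have "(\<Sum>i\<in>K. \<Sum>i'\<in>K. ?w i i' * (?odd (\<lambda>i. a i + b i) i i' + ?odd (\<lambda>i. a i + c i) i i' + ?odd (\<lambda>i. b i + c i) i i'))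
     \<le> (\<Sum>i\<in>K. \<Sum>i'\<in>K. ?w i i' * (?odd a i i' + ?odd b i i' + ?odd c i i' + ?odd (\<lambda>i. a i + b i + c i) i i'))"
    by (intro sum_mono)
  then show ?thesis unfolding parity_cut_def by (simp only: distrib_left sum.distrib)
qed

lemma lincomb_parity_reduction:
  assumes zero_sum: "(\<lambda>j. \<Sum>i\<in>K. v i j) = (\<lambda>_. 0)"
    and obtuse: "\<forall>i\<in>K. \<forall>i'\<in>K. i \<noteq> i' \<longrightarrow> dot r (v i) (v i') \<le> 0"
  defines "sq x \<equiv> dot r x x"
  shows "sq (lincomb K (\<lambda>i. (a i + b i) mod 2) v) + sq (lincomb K (\<lambda>i. (a i + c i) mod 2) v)
      + sq (lincomb K (\<lambda>i. (b i + c i) mod 2) v)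
    \<le> sq (lincomb K a v) + sq (lincomb K b v) + sq (lincomb K c v)
      + sq (lincomb K (\<lambda>i. a i + b i + c i + 2 * d i) v)"
proof -
  let ?cut = "parity_cut r K v"
  have "2 * (sq (lincomb K (\<lambda>i. (a i + b i) mod 2) v) + sq (lincomb K (\<lambda>i. (a i + c i) mod 2) v)
      + sq (lincomb K (\<lambda>i. (b i + c i) mod 2) v))
      = ?cut (\<lambda>i. a i + b i) + ?cut (\<lambda>i. a i + c i) + ?cut (\<lambda>i. b i + c i)"
    unfolding sq_def by (simp add: distrib_left dot_lincomb_mod_2[OF zero_sum])
  also have "\<dots> \<le> ?cut a + ?cut b + ?cut c + ?cut (\<lambda>i. a i + b i + c i + 2 * d i)"
    using parity_cut_triple[OF obtuse] by (simp add: parity_cut_add_even)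
  also have "\<dots> \<le> 2 * (sq (lincomb K a v) + sq (lincomb K b v) + sq (lincomb K c v)
      + sq (lincomb K (\<lambda>i. a i + b i + c i + 2 * d i) v))"
    unfolding sq_def using parity_cut_le_dot[OF zero_sum obtuse] by (smt (verit))
  finally show ?thesis by simp
qed

lemma even_lincomb_mod_2_diff:
  "even (lincomb K (\<lambda>i. (a i + b i) mod 2) v j - lincomb K a v j - lincomb K b v j)"
proof -
  have "lincomb K (\<lambda>i. (a i + b i) mod 2) v j - lincomb K a v j - lincomb K b v j
      = lincomb K (\<lambda>i. (a i + b i) mod 2 - a i - b i) v j"
    unfolding lincomb_def by (simp add: sum_subtractf left_diff_distrib)
  also have "even \<dots>"
    by (rule even_lincomb) (simp add: mod2_eq_if)
  finally show ?thesis .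
qed

lemma obtuse_superbase_parity_reduction:
  assumes "obtuse_superbase r L k v" and "x \<in> L" "y \<in> L" "z \<in> L" "t \<in> L"
  obtains u1 u2 u3 where "u1 \<in> L" "u2 \<in> L" "u3 \<in> L"
    and "\<forall>j. even (u1 j - x j - y j)" "\<forall>j. even (u2 j - x j - z j)" "\<forall>j. even (u3 j - y j - z j)"
    and "dot r u1 u1 + dot r u2 u2 + dot r u3 u3
      \<le> dot r x x + dot r y y + dot r z z + dot r (\<lambda>j. x j + y j + z j + 2 * t j) (\<lambda>j. x j + y j + z j + 2 * t j)"
proof -
  have span: "int_span {..k} v = L" and zero_sum: "(\<lambda>j. \<Sum>i\<le>k. v i j) = (\<lambda>_. 0)"
    and obtuse: "\<forall>i\<in>{..k}. \<forall>i'\<in>{..k}. i \<noteq> i' \<longrightarrow> dot r (v i) (v i') \<le> 0"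
    using assms(1) unfolding obtuse_superbase_def by auto
  obtain a b c d where
    "x = lincomb {..k} a v" "y = lincomb {..k} b v" "z = lincomb {..k} c v" "t = lincomb {..k} d v"
    using assms(2-5) unfolding span[symmetric] int_span_iff_lincomb by metis
  moreover have "(\<lambda>j. x j + y j + z j + 2 * t j) = lincomb {..k} (\<lambda>i. a i + b i + c i + 2 * d i) v"
    using calculation by (simp add: lincomb_def sum.distrib sum_distrib_left algebra_simps)
  moreover have "lincomb {..k} f v \<in> L" for f
    unfolding span[symmetric] int_span_iff_lincomb by blast
  ultimately show ?thesis
    using that[of "lincomb {..k} (\<lambda>i. (a i + b i) mod 2) v" "lincomb {..k} (\<lambda>i. (a i + c i) mod 2) v"
        "lincomb {..k} (\<lambda>i. (b i + c i) mod 2) v"]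
      lincomb_parity_reduction[OF zero_sum obtuse] even_lincomb_mod_2_diff
    by simp
qed

section \<open>Norms in the changemaker lattice\<close>

lemma cm_lattice_half:
  assumes "x \<in> cm_lattice r \<sigma>" "y \<in> cm_lattice r \<sigma>" "z \<in> cm_lattice r \<sigma>" "w \<in> cm_lattice r \<sigma>"
    and w: "\<forall>j. w j = x j + y j + z j + 2 * t j"
  shows "t \<in> cm_lattice r \<sigma>"
proof -
  have "t i = 0" if "i < 1 \<or> r < i" for i
  proof -
    have "x i = 0" "y i = 0" "z i = 0" "w i = 0"
      using assms(1-4) that unfolding cm_lattice_def zvec_def by auto
    then show ?thesis using w by simp
  qed
  then have "t \<in> zvec r" unfolding zvec_def by blast
  moreover have "dot r w \<sigma> = dot r x \<sigma> + dot r y \<sigma> + dot r z \<sigma> + 2 * dot r t \<sigma>"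
    unfolding dot_def by (simp add: w distrib_right sum.distrib sum_distrib_left mult.assoc)
  ultimately show ?thesis using assms(1-4) unfolding cm_lattice_def by simp
qed

definition balanced :: "(nat \<Rightarrow> int) \<Rightarrow> nat set \<Rightarrow> bool" where
  "balanced \<sigma> P \<longleftrightarrow> (\<exists>\<epsilon>. (\<forall>j\<in>P. \<epsilon> j = 1 \<or> \<epsilon> j = -1) \<and> (\<Sum>j\<in>P. \<epsilon> j * \<sigma> j) = 0)"

lemma dot_self_ge_odd_support:
  assumes P: "P \<subseteq> {1..r}" and odd: "\<forall>j\<in>P. odd (u j)"
  shows "int (card P) + (if \<exists>j\<in>{1..r}. 2 \<le> \<bar>u j\<bar> then 3 else 0) \<le> dot r u u"
proof -
  define big where "big = (\<lambda>j. of_bool (2 \<le> \<bar>u j\<bar>) :: int)"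
  have pointwise: "of_bool (j \<in> P) + 3 * big j \<le> (u j)\<^sup>2" for j
  proof (cases "2 \<le> \<bar>u j\<bar>")
    case True
    then have "2 * 2 \<le> \<bar>u j\<bar> * \<bar>u j\<bar>" by (intro mult_mono) auto
    then show ?thesis unfolding big_def using True by (simp add: power2_eq_square)
  next
    case False
    then show ?thesis unfolding big_def using odd of_bool_odd_le_power2[of "u j"] by auto
  qed
  have "int (card P) = (\<Sum>j=1..r. of_bool (j \<in> P))"
    using P by (simp add: Int_absorb1 Int_def[symmetric])
  moreover have "(if \<exists>j\<in>{1..r}. 2 \<le> \<bar>u j\<bar> then 3 else 0) \<le> (\<Sum>j=1..r. 3 * big j)"
  proof (cases "\<exists>j\<in>{1..r}. 2 \<le> \<bar>u j\<bar>")
    case True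
    then obtain j where j: "j \<in> {1..r}" "2 \<le> \<bar>u j\<bar>" by blast
    then have "3 * big j \<le> (\<Sum>j=1..r. 3 * big j)"
      by (intro member_le_sum) (auto simp: big_def)
    with True j show ?thesis by (simp add: big_def)
  qed (simp add: big_def sum_nonneg)
  moreover have "(\<Sum>j=1..r. of_bool (j \<in> P) + 3 * big j) \<le> dot r u u"
    unfolding dot_def power2_eq_square[symmetric] by (rule sum_mono) (rule pointwise)
  ultimately show ?thesis by (simp add: sum.distrib)
qed

definition odd_support_bound :: "(nat \<Rightarrow> int) \<Rightarrow> nat set \<Rightarrow> int" where
  "odd_support_bound \<sigma> P = int (card P) + (if balanced \<sigma> P then 0 else 3)"

lemma odd_support_bound_ge_card: "int (card P) \<le> odd_support_bound \<sigma> P"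
  unfolding odd_support_bound_def by simp

lemma odd_support_bound_le_dot:
  assumes u: "u \<in> cm_lattice r \<sigma>" and P: "P \<subseteq> {1..r}"
    and odd: "\<forall>j\<in>{1..r}. odd (u j) \<longleftrightarrow> j \<in> P"
  shows "odd_support_bound \<sigma> P \<le> dot r u u"
proof -
  have "\<forall>j\<in>P. odd (u j)" using odd P by auto
  note bound = dot_self_ge_odd_support[OF P this]
  show ?thesis
  proof (cases "\<exists>j\<in>{1..r}. 2 \<le> \<bar>u j\<bar>")
    case True
    then show ?thesis using bound unfolding odd_support_bound_def by simp
  next
    case False
    have unit: "u j = -1 \<or> u j = 0 \<or> u j = 1" if "j \<in> {1..r}" for j
    proof -
      have "\<bar>u j\<bar> < 2" using False that not_le by blast
      then show ?thesis by arith
    qed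
    then have signs: "\<forall>j\<in>P. u j = 1 \<or> u j = -1" and zero: "\<forall>j\<in>{1..r} - P. u j = 0"
      using odd P by fastforce+
    have "(\<Sum>j\<in>P. u j * \<sigma> j) = (\<Sum>j=1..r. u j * \<sigma> j)"
      using P zero by (intro sum.mono_neutral_left) auto
    also have "\<dots> = 0" using u unfolding cm_lattice_def dot_def by simp
    finally have "balanced \<sigma> P"
      unfolding balanced_def using signs by blast
    then show ?thesis using bound False unfolding odd_support_bound_def by simp
  qed
qed

lemma odd_support_congruent:
  fixes u x y :: "nat \<Rightarrow> int"
  assumes "\<forall>j. even (u j - x j - y j)" and "\<forall>j\<in>{1..r}. odd (x j + y j) \<longleftrightarrow> j \<in> P"
  shows "\<forall>j\<in>{1..r}. odd (u j) \<longleftrightarrow> j \<in> P"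
proof
  fix j assume j: "j \<in> {1..r}"
  have "even (u j - x j - y j)" using assms(1) by blast
  then have "odd (u j) \<longleftrightarrow> odd (x j + y j)" by presburger
  with assms(2) j show "odd (u j) \<longleftrightarrow> j \<in> P" by blast
qed

definition signed_indicator :: "nat set \<Rightarrow> nat set \<Rightarrow> nat \<Rightarrow> int" where
  "signed_indicator P N = (\<lambda>j. of_bool (j \<in> P) - of_bool (j \<in> N))"

lemma dot_signed_indicator:
  assumes "P \<subseteq> {1..r}" "N \<subseteq> {1..r}"
  shows "dot r (signed_indicator P N) f = sum f P - sum f N"
proof -
  have "dot r (signed_indicator P N) f = (\<Sum>j=1..r. of_bool (j \<in> P) * f j) - (\<Sum>j=1..r. of_bool (j \<in> N) * f j)"
    unfolding dot_def signed_indicator_def by (simp add: left_diff_distrib sum_subtractf)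
  also have "\<dots> = sum f P - sum f N"
    using assms by (simp add: sum.inter_restrict[symmetric] Int_absorb1)
  finally show ?thesis .
qed

lemma signed_indicator_in_cm_lattice:
  assumes "P \<subseteq> {1..r}" "N \<subseteq> {1..r}" "sum \<sigma> P = sum \<sigma> N"
  shows "signed_indicator P N \<in> cm_lattice r \<sigma>"
  using assms dot_signed_indicator[OF assms(1,2)]
  unfolding cm_lattice_def zvec_def signed_indicator_def by auto

lemma dot_signed_indicator_self:
  assumes "P \<subseteq> {1..r}" "N \<subseteq> {1..r}" "P \<inter> N = {}"
  shows "dot r (signed_indicator P N) (signed_indicator P N) = int (card P) + int (card N)"
proof -
  have "finite P" "finite N" using assms(1,2) finite_subset by auto
  moreover have "signed_indicator P N j = of_bool (j \<in> P) - of_bool (j \<in> N)" for j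
    unfolding signed_indicator_def ..
  ultimately show ?thesis
    using assms by (simp add: dot_signed_indicator sum_subtractf of_bool_def sum.If_cases Int_absorb1
        Diff_triv Int_commute)
qed

lemma not_balanced_insert_dominant:
  assumes "finite Q" "t \<notin> Q" "\<forall>j\<in>Q. 0 \<le> \<sigma> j" "sum \<sigma> Q < \<sigma> t"
  shows "\<not> balanced \<sigma> (insert t Q)"
proof
  assume "balanced \<sigma> (insert t Q)"
  then obtain \<epsilon> where signs: "\<forall>j\<in>insert t Q. \<epsilon> j = 1 \<or> \<epsilon> j = -1"
    and "(\<Sum>j\<in>insert t Q. \<epsilon> j * \<sigma> j) = 0"
    unfolding balanced_def by blast
  then have "\<bar>\<epsilon> t * \<sigma> t\<bar> = \<bar>\<Sum>j\<in>Q. \<epsilon> j * \<sigma> j\<bar>" using assms(1,2) by simp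
  also have "\<dots> \<le> (\<Sum>j\<in>Q. \<bar>\<epsilon> j * \<sigma> j\<bar>)" by (rule sum_abs)
  also have "\<dots> = sum \<sigma> Q"
    using signs assms(3) by (intro sum.cong) (auto simp: abs_mult)
  finally have "\<bar>\<sigma> t\<bar> \<le> sum \<sigma> Q" using signs by (auto simp: abs_mult)
  with assms(4) show False by linarith
qed

lemma not_balanced_three_equal:
  assumes "distinct [p, q, s]" "\<sigma> p = c" "\<sigma> q = c" "\<sigma> s = c" "c \<noteq> 0"
  shows "\<not> balanced \<sigma> {p, q, s}"
proof
  assume "balanced \<sigma> {p, q, s}"
  then obtain \<epsilon> where "\<forall>j\<in>{p, q, s}. \<epsilon> j = 1 \<or> \<epsilon> j = -1" and "(\<epsilon> p + \<epsilon> q + \<epsilon> s) * c = 0"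
    unfolding balanced_def using assms by (auto simp: distrib_right)
  with assms(5) show False by auto
qed

section \<open>Coefficients of a changemaker vector\<close>

definition level :: "nat \<Rightarrow> (nat \<Rightarrow> int) \<Rightarrow> int \<Rightarrow> nat set" where
  "level r \<sigma> c = {j \<in> {1..r}. \<sigma> j = c}"

lemma mem_level: "j \<in> level r \<sigma> c \<longleftrightarrow> j \<in> {1..r} \<and> \<sigma> j = c"
  unfolding level_def by simp

lemma finite_level: "finite (level r \<sigma> c)"
  unfolding level_def by simp

lemma card_level_eq_sum: "int (card (level r \<sigma> c)) = (\<Sum>j=1..r. of_bool (\<sigma> j = c))"
proof -
  have "{1..r} \<inter> {j. \<sigma> j = c} = level r \<sigma> c" unfolding level_def by auto
  then show ?thesis by simp
qed

lemma card_4_iff: "card S = 4 \<longleftrightarrow> (\<exists>a b c d. S = {a, b, c, d} \<and> distinct [a, b, c, d])"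
proof
  assume S: "card S = 4"
  then obtain a where a: "a \<in> S" by fastforce
  with S have "card (S - {a}) = 3" by (simp add: card_Diff_singleton_if)
  then obtain b c d where "S - {a} = {b, c, d}" "b \<noteq> c" "c \<noteq> d" "b \<noteq> d"
    unfolding card_3_iff by blast
  with a have "S = {a, b, c, d} \<and> distinct [a, b, c, d]" by auto
  then show "\<exists>a b c d. S = {a, b, c, d} \<and> distinct [a, b, c, d]" by blast
qed auto

lemma obtain_subset_sum_ones_twos:
  assumes "finite A" "finite B" "A \<inter> B = {}" "\<forall>j\<in>A. \<sigma> j = 1" "\<forall>j\<in>B. \<sigma> j = 2"
    and "0 \<le> s" "s \<le> int (card A) + 2 * int (card B)" "A \<noteq> {} \<or> even s"
  obtains Q where "Q \<subseteq> A \<union> B" "sum \<sigma> Q = s"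
proof -
  define k where "k = min (card B) (nat (s div 2))"
  have k: "k \<le> card B" "2 * int k \<le> s"
    unfolding k_def using assms(6) by auto
  have "s - 2 * int k \<le> int (card A)"
  proof (cases "card B \<le> nat (s div 2)")
    case True
    then show ?thesis unfolding k_def using assms(7) by simp
  next
    case False
    then have "s - 2 * int k = s mod 2"
      unfolding k_def using assms(6) by (simp add: minus_mult_div_eq_mod)
    moreover have "A \<noteq> {} \<Longrightarrow> 1 \<le> card A" using assms(1) by (simp add: Suc_leI card_gt_0_iff)
    ultimately show ?thesis using assms(8) by (auto simp: mod2_eq_if)
  qed
  then have "nat (s - 2 * int k) \<le> card A" by (simp add: nat_le_iff)
  then obtain QA where QA: "QA \<subseteq> A" "card QA = nat (s - 2 * int k)" "finite QA"
    by (rule obtain_subset_with_card_n)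
  obtain QB where QB: "QB \<subseteq> B" "card QB = k" "finite QB"
    by (rule obtain_subset_with_card_n[OF k(1)])
  have "sum \<sigma> QA = (\<Sum>j\<in>QA. 1)" using QA(1) assms(4) by (intro sum.cong) auto
  moreover have "sum \<sigma> QB = (\<Sum>j\<in>QB. 2)" using QB(1) assms(5) by (intro sum.cong) auto
  ultimately have "sum \<sigma> QA + sum \<sigma> QB = s" using QA(2) QB(2) k(2) by simp
  moreover have "sum \<sigma> (QA \<union> QB) = sum \<sigma> QA + sum \<sigma> QB"
    using QA QB assms(3) by (intro sum.union_disjoint) auto
  ultimately have "sum \<sigma> (QA \<union> QB) = s" by simp
  with QA(1) QB(1) show ?thesis by (intro that[of "QA \<union> QB"]) auto
qed

lemma changemaker_ge_1:
  assumes "changemaker r \<sigma>" "j \<in> {1..r}"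
  shows "1 \<le> \<sigma> j"
  using assms(2)
proof (induction j)
  case (Suc j)
  have one: "\<sigma> 1 = 1" and mono: "\<forall>i\<in>{2..r}. \<sigma> (i - 1) \<le> \<sigma> i"
    using assms(1) unfolding changemaker_def by auto
  show ?case
  proof (cases "j = 0")
    case False
    then have "\<sigma> j \<le> \<sigma> (Suc j)" using mono[rule_format, of "Suc j"] Suc.prems by simp
    with False Suc show ?thesis by simp
  qed (use one in simp)
qed simp

lemma sum_defect_le_counts:
  assumes pos: "\<forall>j\<in>{1..r}. 1 \<le> \<sigma> j" and r: "1 \<le> r" and top: "3 \<le> \<sigma> r"
  shows "(\<Sum>j=1..r. \<sigma> j * (3 - \<sigma> j))
    \<le> 2 * int (card (level r \<sigma> 1)) + 2 * int (card (level r \<sigma> 2)) + \<sigma> r * (3 - \<sigma> r)"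
proof -
  have "\<sigma> j * (3 - \<sigma> j) \<le> 2 * of_bool (\<sigma> j = 1) + 2 * of_bool (\<sigma> j = 2) + (if j = r then \<sigma> r * (3 - \<sigma> r) else 0)"
    if "j \<in> {1..r}" for j
  proof -
    have "1 \<le> \<sigma> j" using pos that by blast
    show ?thesis
    proof (cases "\<sigma> j \<le> 2")
      case True
      with \<open>1 \<le> \<sigma> j\<close> have "\<sigma> j = 1 \<or> \<sigma> j = 2" by linarith
      then show ?thesis using top by auto
    next
      case False
      then have "\<sigma> j * (3 - \<sigma> j) \<le> 0" by (simp add: mult_nonneg_nonpos)
      with False show ?thesis by auto
    qed
  qed
  then have "(\<Sum>j=1..r. \<sigma> j * (3 - \<sigma> j))
      \<le> (\<Sum>j=1..r. 2 * of_bool (\<sigma> j = 1) + 2 * of_bool (\<sigma> j = 2) + (if j = r then \<sigma> r * (3 - \<sigma> r) else 0))"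
    by (rule sum_mono)
  also have "\<dots> = 2 * int (card (level r \<sigma> 1)) + 2 * int (card (level r \<sigma> 2)) + \<sigma> r * (3 - \<sigma> r)"
    using r by (simp add: sum.distrib sum_distrib_left[symmetric] card_level_eq_sum)
  finally show ?thesis .
qed

lemma changemaker_bound_iff:
  "real_of_int (dot r \<sigma> \<sigma>) \<le> 4 + 3/2 * (\<Sum>i=1..r. real_of_int (\<sigma> i * (\<sigma> i - 1)))
    \<longleftrightarrow> (\<Sum>j=1..r. \<sigma> j * (3 - \<sigma> j)) \<le> 8"
proof -
  let ?T = "\<Sum>i=1..r. \<sigma> i * (\<sigma> i - 1)"
  have "2 * dot r \<sigma> \<sigma> - 3 * ?T = (\<Sum>i=1..r. 2 * (\<sigma> i * \<sigma> i) - 3 * (\<sigma> i * (\<sigma> i - 1)))"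
    unfolding dot_def by (simp add: sum_distrib_left sum_subtractf)
  also have "\<dots> = (\<Sum>j=1..r. \<sigma> j * (3 - \<sigma> j))"
    by (rule sum.cong) (simp_all add: algebra_simps)
  finally have "real_of_int (\<Sum>j=1..r. \<sigma> j * (3 - \<sigma> j)) = 2 * real_of_int (dot r \<sigma> \<sigma>) - 3 * real_of_int ?T"
    by (simp only: of_int_diff of_int_mult of_int_numeral)
  moreover have "(\<Sum>i=1..r. real_of_int (\<sigma> i * (\<sigma> i - 1))) = real_of_int ?T" by simp
  ultimately have "real_of_int (dot r \<sigma> \<sigma>) \<le> 4 + 3/2 * (\<Sum>i=1..r. real_of_int (\<sigma> i * (\<sigma> i - 1)))
      \<longleftrightarrow> real_of_int (\<Sum>j=1..r. \<sigma> j * (3 - \<sigma> j)) \<le> 8"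
    by (intro iffI; linarith)
  then show ?thesis by (simp only: of_int_le_numeral_iff)
qed

section \<open>Forbidden configurations\<close>

locale cm_lattice_obtuse_superbase =
  fixes r :: nat and \<sigma> :: "nat \<Rightarrow> int" and k :: nat and v :: "nat \<Rightarrow> nat \<Rightarrow> int"
  assumes obtuse_superbase: "obtuse_superbase r (cm_lattice r \<sigma>) k v"
begin

lemma odd_support_bounds_le_norms:
  assumes x: "x \<in> cm_lattice r \<sigma>" and y: "y \<in> cm_lattice r \<sigma>"
    and z: "z \<in> cm_lattice r \<sigma>" and w: "w \<in> cm_lattice r \<sigma>"
    and parity: "\<forall>j. even (w j - x j - y j - z j)"
    and P1: "P1 \<subseteq> {1..r}" "\<forall>j\<in>{1..r}. odd (x j + y j) \<longleftrightarrow> j \<in> P1"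
    and P2: "P2 \<subseteq> {1..r}" "\<forall>j\<in>{1..r}. odd (x j + z j) \<longleftrightarrow> j \<in> P2"
    and P3: "P3 \<subseteq> {1..r}" "\<forall>j\<in>{1..r}. odd (y j + z j) \<longleftrightarrow> j \<in> P3"
  shows "odd_support_bound \<sigma> P1 + odd_support_bound \<sigma> P2 + odd_support_bound \<sigma> P3
    \<le> dot r x x + dot r y y + dot r z z + dot r w w"
proof -
  define t where "t = (\<lambda>j. (w j - x j - y j - z j) div 2)"
  have w_eq: "\<forall>j. w j = x j + y j + z j + 2 * t j"
    using parity unfolding t_def by auto
  then have w_fun: "(\<lambda>j. x j + y j + z j + 2 * t j) = w" by auto
  have t: "t \<in> cm_lattice r \<sigma>" by (rule cm_lattice_half[OF x y z w w_eq])
  obtain u1 u2 u3 where u: "u1 \<in> cm_lattice r \<sigma>" "u2 \<in> cm_lattice r \<sigma>" "u3 \<in> cm_lattice r \<sigma>"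
    and u_parity: "\<forall>j. even (u1 j - x j - y j)" "\<forall>j. even (u2 j - x j - z j)" "\<forall>j. even (u3 j - y j - z j)"
    and le: "dot r u1 u1 + dot r u2 u2 + dot r u3 u3 \<le> dot r x x + dot r y y + dot r z z + dot r w w"
    by (rule obtuse_superbase_parity_reduction[OF obtuse_superbase x y z t, unfolded w_fun])
  show ?thesis
    using odd_support_bound_le_dot[OF u(1) P1(1) odd_support_congruent[OF u_parity(1) P1(2)]]
      odd_support_bound_le_dot[OF u(2) P2(1) odd_support_congruent[OF u_parity(2) P2(2)]]
      odd_support_bound_le_dot[OF u(3) P3(1) odd_support_congruent[OF u_parity(3) P3(2)]] le
    by linarith
qed

(* In each configuration, x, y, z, w are sums of vectors +-e_i in L whose norms add up to less
   than the odd-support bounds of x + y, x + z and y + z. *)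

lemma no_four_equal_and_double_sum:
  assumes X: "X \<subseteq> level r \<sigma> c" "card X = 4" and c: "1 \<le> c"
    and t: "t \<in> {1..r}" and Q: "Q \<subseteq> {1..r}" "Q \<inter> X = {}" "t \<notin> Q" "\<forall>j\<in>Q. 0 \<le> \<sigma> j"
    and top: "\<sigma> t = 2 * c + sum \<sigma> Q"
  shows False
proof -
  obtain al be ga de where X_eq: "X = {al, be, ga, de}" and dist: "distinct [al, be, ga, de]"
    using X(2) unfolding card_4_iff by blast
  have finite: "finite Q" using Q(1) finite_subset by blast
  have "0 \<le> sum \<sigma> Q" using Q(4) by (simp add: sum_nonneg)
  with top c X(1) have "t \<notin> X" unfolding level_def by auto
  then have t_new: "t \<noteq> al" "t \<noteq> be" "t \<noteq> ga" "t \<noteq> de" by (simp_all add: X_eq)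
  have Q_new: "al \<notin> Q" "be \<notin> Q" "ga \<notin> Q" "de \<notin> Q" using Q(2) by (auto simp: X_eq)
  have "{al, be, ga, de} \<subseteq> level r \<sigma> c" using X(1) by (simp add: X_eq)
  then have range: "{al, be, ga, de, t} \<subseteq> {1..r}" and vals: "\<sigma> al = c" "\<sigma> be = c" "\<sigma> ga = c" "\<sigma> de = c"
    using t unfolding level_def by auto
  note indices = range t_new Q_new Q(3)
  define x where "x = signed_indicator {al} {be}"
  define y where "y = signed_indicator (insert al (insert be Q)) {t}"
  define z where "z = signed_indicator {ga} {de}"
  define w where "w = signed_indicator (insert ga (insert de Q)) {t}"
  have "sum \<sigma> (insert al (insert be Q)) = sum \<sigma> {t}" "sum \<sigma> (insert ga (insert de Q)) = sum \<sigma> {t}"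
    using finite dist Q_new by (simp_all add: vals top)
  then have in_L: "x \<in> cm_lattice r \<sigma>" "y \<in> cm_lattice r \<sigma>" "z \<in> cm_lattice r \<sigma>" "w \<in> cm_lattice r \<sigma>"
    unfolding x_def y_def z_def w_def using range Q(1)
    by (auto intro!: signed_indicator_in_cm_lattice simp: vals)
  have "\<forall>j. even (w j - x j - y j - z j)"
    unfolding x_def y_def z_def w_def signed_indicator_def using indices dist by auto
  moreover have "\<forall>j\<in>{1..r}. odd (x j + y j) \<longleftrightarrow> j \<in> insert t Q"
    unfolding x_def y_def signed_indicator_def using indices dist by auto
  moreover have "\<forall>j\<in>{1..r}. odd (x j + z j) \<longleftrightarrow> j \<in> {al, be, ga, de}"
    unfolding x_def z_def signed_indicator_def using indices dist by auto
  moreover have "\<forall>j\<in>{1..r}. odd (y j + z j) \<longleftrightarrow> j \<in> insert al (insert be (insert ga (insert de (insert t Q))))"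
    unfolding y_def z_def signed_indicator_def using indices dist by auto
  ultimately have "odd_support_bound \<sigma> (insert t Q) + odd_support_bound \<sigma> {al, be, ga, de}
      + odd_support_bound \<sigma> (insert al (insert be (insert ga (insert de (insert t Q)))))
      \<le> dot r x x + dot r y y + dot r z z + dot r w w"
    using indices Q(1) by (intro odd_support_bounds_le_norms[OF in_L]) auto
  moreover have "dot r x x + dot r y y + dot r z z + dot r w w = 2 * int (card Q) + 10"
    unfolding x_def y_def z_def w_def
    using indices dist Q(1,3) finite by (simp add: dot_signed_indicator_self)
  moreover have "\<not> balanced \<sigma> (insert t Q)"
    using finite Q(3,4) top c by (intro not_balanced_insert_dominant) auto
  then have "odd_support_bound \<sigma> (insert t Q) = int (card Q) + 4"
    using finite Q(3) unfolding odd_support_bound_def by simp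
  moreover have "4 \<le> odd_support_bound \<sigma> {al, be, ga, de}"
    using odd_support_bound_ge_card[of "{al, be, ga, de}" \<sigma>] dist by simp
  moreover have "int (card Q) + 5 \<le> odd_support_bound \<sigma> (insert al (insert be (insert ga (insert de (insert t Q)))))"
    using odd_support_bound_ge_card[of "insert al (insert be (insert ga (insert de (insert t Q))))" \<sigma>]
      indices dist finite Q(3) by simp
  ultimately show False by linarith
qed

lemma no_four_twos_one_three:
  assumes X: "X \<subseteq> level r \<sigma> 2" "card X = 4"
    and io: "io \<in> level r \<sigma> 1" and t: "t \<in> level r \<sigma> 3"
  shows False
proof -
  obtain al be ga de where X_eq: "X = {al, be, ga, de}" and dist4: "distinct [al, be, ga, de]"
    using X(2) unfolding card_4_iff by blast
  have "{al, be, ga, de} \<subseteq> level r \<sigma> 2" using X(1) by (simp add: X_eq)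
  then have range: "{al, be, ga, de, io, t} \<subseteq> {1..r}"
    and vals: "\<sigma> al = 2" "\<sigma> be = 2" "\<sigma> ga = 2" "\<sigma> de = 2" "\<sigma> io = 1" "\<sigma> t = 3"
    using io t unfolding level_def by auto
  then have dist: "distinct [al, be, ga, de, io, t]" using dist4 by auto
  define x where "x = signed_indicator {al} {be}"
  define y where "y = signed_indicator {al, be} {io, t}"
  define z where "z = signed_indicator {ga} {de}"
  define w where "w = signed_indicator {ga, de} {io, t}"
  have "sum \<sigma> {al, be} = sum \<sigma> {io, t}" "sum \<sigma> {ga, de} = sum \<sigma> {io, t}"
    using dist by (simp_all add: vals)
  then have in_L: "x \<in> cm_lattice r \<sigma>" "y \<in> cm_lattice r \<sigma>" "z \<in> cm_lattice r \<sigma>" "w \<in> cm_lattice r \<sigma>"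
    unfolding x_def y_def z_def w_def using range
    by (auto intro!: signed_indicator_in_cm_lattice simp: vals)
  have "\<forall>j. even (w j - x j - y j - z j)"
    unfolding x_def y_def z_def w_def signed_indicator_def using dist by auto
  moreover have "\<forall>j\<in>{1..r}. odd (x j + y j) \<longleftrightarrow> j \<in> {t, io}"
    unfolding x_def y_def signed_indicator_def using dist by auto
  moreover have "\<forall>j\<in>{1..r}. odd (x j + z j) \<longleftrightarrow> j \<in> {al, be, ga, de}"
    unfolding x_def z_def signed_indicator_def using dist by auto
  moreover have "\<forall>j\<in>{1..r}. odd (y j + z j) \<longleftrightarrow> j \<in> {al, be, ga, de, io, t}"
    unfolding y_def z_def signed_indicator_def using dist by auto
  ultimately have "odd_support_bound \<sigma> {t, io} + odd_support_bound \<sigma> {al, be, ga, de}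
      + odd_support_bound \<sigma> {al, be, ga, de, io, t} \<le> dot r x x + dot r y y + dot r z z + dot r w w"
    using range by (intro odd_support_bounds_le_norms[OF in_L]) auto
  moreover have "dot r x x + dot r y y + dot r z z + dot r w w = 12"
    unfolding x_def y_def z_def w_def using range dist by (simp add: dot_signed_indicator_self)
  moreover have "\<not> balanced \<sigma> {t, io}"
    using dist by (intro not_balanced_insert_dominant) (auto simp: vals)
  then have "odd_support_bound \<sigma> {t, io} = 5"
    using dist unfolding odd_support_bound_def by auto
  moreover have "4 \<le> odd_support_bound \<sigma> {al, be, ga, de}" "6 \<le> odd_support_bound \<sigma> {al, be, ga, de, io, t}"
    using odd_support_bound_ge_card[of "{al, be, ga, de}" \<sigma>]
      odd_support_bound_ge_card[of "{al, be, ga, de, io, t}" \<sigma>] dist by simp_all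
  ultimately show False by linarith
qed

lemma no_two_twos_three_ones_three:
  assumes X: "X \<subseteq> level r \<sigma> 2" "card X = 2" and Y: "Y \<subseteq> level r \<sigma> 1" "card Y = 3"
    and t: "t \<in> level r \<sigma> 3"
  shows False
proof -
  obtain al be where X_eq: "X = {al, be}" and "al \<noteq> be"
    using X(2) unfolding card_2_iff by blast
  obtain ga de io where Y_eq: "Y = {ga, de, io}" and "ga \<noteq> de" "de \<noteq> io" "ga \<noteq> io"
    using Y(2) unfolding card_3_iff by blast
  have "{al, be} \<subseteq> level r \<sigma> 2" "{ga, de, io} \<subseteq> level r \<sigma> 1"
    using X(1) Y(1) by (simp_all add: X_eq Y_eq)
  then have range: "{al, be, ga, de, io, t} \<subseteq> {1..r}"
    and vals: "\<sigma> al = 2" "\<sigma> be = 2" "\<sigma> ga = 1" "\<sigma> de = 1" "\<sigma> io = 1" "\<sigma> t = 3"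
    using t unfolding level_def by auto
  then have dist: "distinct [al, be, ga, de, io, t]"
    using \<open>al \<noteq> be\<close> \<open>ga \<noteq> de\<close> \<open>de \<noteq> io\<close> \<open>ga \<noteq> io\<close> by auto
  define x where "x = signed_indicator {al} {be}"
  define y where "y = signed_indicator {al, be} {io, t}"
  define z where "z = signed_indicator {ga} {de}"
  define w where "w = signed_indicator {ga, de, io} {t}"
  have "sum \<sigma> {al, be} = sum \<sigma> {io, t}" "sum \<sigma> {ga, de, io} = sum \<sigma> {t}"
    using dist by (simp_all add: vals)
  then have in_L: "x \<in> cm_lattice r \<sigma>" "y \<in> cm_lattice r \<sigma>" "z \<in> cm_lattice r \<sigma>" "w \<in> cm_lattice r \<sigma>"
    unfolding x_def y_def z_def w_def using range
    by (auto intro!: signed_indicator_in_cm_lattice simp: vals)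
  have "\<forall>j. even (w j - x j - y j - z j)"
    unfolding x_def y_def z_def w_def signed_indicator_def using dist by auto
  moreover have "\<forall>j\<in>{1..r}. odd (x j + y j) \<longleftrightarrow> j \<in> {t, io}"
    unfolding x_def y_def signed_indicator_def using dist by auto
  moreover have "\<forall>j\<in>{1..r}. odd (x j + z j) \<longleftrightarrow> j \<in> {al, be, ga, de}"
    unfolding x_def z_def signed_indicator_def using dist by auto
  moreover have "\<forall>j\<in>{1..r}. odd (y j + z j) \<longleftrightarrow> j \<in> {al, be, ga, de, io, t}"
    unfolding y_def z_def signed_indicator_def using dist by auto
  ultimately have "odd_support_bound \<sigma> {t, io} + odd_support_bound \<sigma> {al, be, ga, de}
      + odd_support_bound \<sigma> {al, be, ga, de, io, t} \<le> dot r x x + dot r y y + dot r z z + dot r w w"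
    using range by (intro odd_support_bounds_le_norms[OF in_L]) auto
  moreover have "dot r x x + dot r y y + dot r z z + dot r w w = 12"
    unfolding x_def y_def z_def w_def using range dist by (simp add: dot_signed_indicator_self)
  moreover have "\<not> balanced \<sigma> {t, io}"
    using dist by (intro not_balanced_insert_dominant) (auto simp: vals)
  then have "odd_support_bound \<sigma> {t, io} = 5"
    using dist unfolding odd_support_bound_def by auto
  moreover have "4 \<le> odd_support_bound \<sigma> {al, be, ga, de}" "6 \<le> odd_support_bound \<sigma> {al, be, ga, de, io, t}"
    using odd_support_bound_ge_card[of "{al, be, ga, de}" \<sigma>]
      odd_support_bound_ge_card[of "{al, be, ga, de, io, t}" \<sigma>] dist by simp_all
  ultimately show False by linarith
qed

lemma no_two_ones_three_twos_three:
  assumes X: "X \<subseteq> level r \<sigma> 1" "card X = 2" and Y: "Y \<subseteq> level r \<sigma> 2" "card Y = 3"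
    and t: "t \<in> level r \<sigma> 3"
  shows False
proof -
  obtain o1 o2 where X_eq: "X = {o1, o2}" and "o1 \<noteq> o2"
    using X(2) unfolding card_2_iff by blast
  obtain p q p' where Y_eq: "Y = {p, q, p'}" and "p \<noteq> q" "q \<noteq> p'" "p \<noteq> p'"
    using Y(2) unfolding card_3_iff by blast
  have "{o1, o2} \<subseteq> level r \<sigma> 1" "{p, q, p'} \<subseteq> level r \<sigma> 2"
    using X(1) Y(1) by (simp_all add: X_eq Y_eq)
  then have range: "{o1, o2, p, q, p', t} \<subseteq> {1..r}"
    and vals: "\<sigma> o1 = 1" "\<sigma> o2 = 1" "\<sigma> p = 2" "\<sigma> q = 2" "\<sigma> p' = 2" "\<sigma> t = 3"
    using t unfolding level_def by auto
  then have dist: "distinct [o1, o2, p, q, p', t]"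
    using \<open>o1 \<noteq> o2\<close> \<open>p \<noteq> q\<close> \<open>q \<noteq> p'\<close> \<open>p \<noteq> p'\<close> by auto
  define x where "x = signed_indicator {p'} {o1, o2}"
  define y where "y = signed_indicator {t} {o1, p'}"
  define z where "z = signed_indicator {p, q} {o1, t}"
  define w where "w = signed_indicator {o1, p} {o2, q}"
  have "sum \<sigma> {p'} = sum \<sigma> {o1, o2}" "sum \<sigma> {t} = sum \<sigma> {o1, p'}"
    "sum \<sigma> {p, q} = sum \<sigma> {o1, t}" "sum \<sigma> {o1, p} = sum \<sigma> {o2, q}"
    using dist by (simp_all add: vals)
  then have in_L: "x \<in> cm_lattice r \<sigma>" "y \<in> cm_lattice r \<sigma>" "z \<in> cm_lattice r \<sigma>" "w \<in> cm_lattice r \<sigma>"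
    unfolding x_def y_def z_def w_def using range
    by (auto intro!: signed_indicator_in_cm_lattice simp: vals)
  have "\<forall>j. even (w j - x j - y j - z j)"
    unfolding x_def y_def z_def w_def signed_indicator_def using dist by auto
  moreover have "\<forall>j\<in>{1..r}. odd (x j + y j) \<longleftrightarrow> j \<in> {t, o2}"
    unfolding x_def y_def signed_indicator_def using dist by auto
  moreover have "\<forall>j\<in>{1..r}. odd (x j + z j) \<longleftrightarrow> j \<in> {p', o2, p, q, t}"
    unfolding x_def z_def signed_indicator_def using dist by auto
  moreover have "\<forall>j\<in>{1..r}. odd (y j + z j) \<longleftrightarrow> j \<in> {p', p, q}"
    unfolding y_def z_def signed_indicator_def using dist by auto
  ultimately have "odd_support_bound \<sigma> {t, o2} + odd_support_bound \<sigma> {p', o2, p, q, t}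
      + odd_support_bound \<sigma> {p', p, q} \<le> dot r x x + dot r y y + dot r z z + dot r w w"
    using range by (intro odd_support_bounds_le_norms[OF in_L]) auto
  moreover have "dot r x x + dot r y y + dot r z z + dot r w w = 14"
    unfolding x_def y_def z_def w_def using range dist by (simp add: dot_signed_indicator_self)
  moreover have "\<not> balanced \<sigma> {t, o2}"
    using dist by (intro not_balanced_insert_dominant) (auto simp: vals)
  then have "odd_support_bound \<sigma> {t, o2} = 5"
    using dist unfolding odd_support_bound_def by auto
  moreover have "\<not> balanced \<sigma> {p', p, q}"
    using dist by (intro not_balanced_three_equal) (auto simp: vals)
  then have "odd_support_bound \<sigma> {p', p, q} = 6"
    using dist unfolding odd_support_bound_def by auto
  moreover have "5 \<le> odd_support_bound \<sigma> {p', o2, p, q, t}"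
    using odd_support_bound_ge_card[of "{p', o2, p, q, t}" \<sigma>] dist by auto
  ultimately show False by linarith
qed

lemma count_bound_many_ones:
  assumes ones: "4 \<le> card (level r \<sigma> 1)" and r: "1 \<le> r" and top: "3 \<le> \<sigma> r"
  shows "2 * int (card (level r \<sigma> 1)) + 2 * int (card (level r \<sigma> 2)) + \<sigma> r * (3 - \<sigma> r) \<le> 8"
proof (rule ccontr)
  assume violated: "\<not> ?thesis"
  obtain X where X: "X \<subseteq> level r \<sigma> 1" "card X = 4" "finite X"
    using ones by (rule obtain_subset_with_card_n)
  have t: "r \<in> {1..r}" using r by simp
  show False
  proof (cases "level r \<sigma> 2 = {}")
    case False
    then obtain t where "t \<in> level r \<sigma> 2" by blast
    then show False
      by (intro no_four_equal_and_double_sum[OF X(1,2), of t "{}"]) (simp_all add: mem_level)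
  next
    case True
    have "0 \<le> (\<sigma> r - 2) * (\<sigma> r - 3)" using top by simp
    then have "\<sigma> r * (3 - \<sigma> r) \<le> 6 - 2 * \<sigma> r" by (simp add: algebra_simps)
    moreover have "int (card (level r \<sigma> 1 - X)) = int (card (level r \<sigma> 1)) - 4"
      using X by (simp add: card_Diff_subset ones)
    ultimately have room: "\<sigma> r - 2 \<le> int (card (level r \<sigma> 1 - X))" using violated True by simp
    have "0 < card (level r \<sigma> 1 - X)" using room top by linarith
    then have nonempty: "level r \<sigma> 1 - X \<noteq> {}" by (metis card.empty less_irrefl)
    obtain Q where Q: "Q \<subseteq> (level r \<sigma> 1 - X) \<union> {}" "sum \<sigma> Q = \<sigma> r - 2"
      by (rule obtain_subset_sum_ones_twos[of "level r \<sigma> 1 - X" "{}" \<sigma>])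
        (use top room nonempty in \<open>simp_all add: finite_level mem_level\<close>)
    then have "Q \<subseteq> {1..r}" "Q \<inter> X = {}" "r \<notin> Q" "\<forall>j\<in>Q. 0 \<le> \<sigma> j"
      using top by (auto simp: mem_level)
    moreover have "\<sigma> r = 2 * 1 + sum \<sigma> Q" using Q(2) by simp
    ultimately show False by (intro no_four_equal_and_double_sum[OF X(1,2) _ t]) simp_all
  qed
qed

lemma count_bound_few_ones:
  assumes ones: "card (level r \<sigma> 1) \<le> 3" "level r \<sigma> 1 \<noteq> {}" and r: "1 \<le> r" and top: "4 \<le> \<sigma> r"
  shows "2 * int (card (level r \<sigma> 1)) + 2 * int (card (level r \<sigma> 2)) + \<sigma> r * (3 - \<sigma> r) \<le> 8"
proof (rule ccontr)
  assume violated: "\<not> ?thesis"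
  have "0 \<le> \<sigma> r * (\<sigma> r - 4)" using top by simp
  then have "\<sigma> r * (3 - \<sigma> r) \<le> - \<sigma> r" by (simp add: algebra_simps)
  with violated have many: "8 + \<sigma> r < 2 * int (card (level r \<sigma> 1)) + 2 * int (card (level r \<sigma> 2))"
    by linarith
  have room: "\<sigma> r - 4 \<le> int (card (level r \<sigma> 1)) + 2 * (int (card (level r \<sigma> 2)) - 4)"
    using many ones(1) by presburger
  have "4 \<le> int (card (level r \<sigma> 2))"
    using many ones(1) top by presburger
  then have twos: "4 \<le> card (level r \<sigma> 2)" by simp
  obtain X where X: "X \<subseteq> level r \<sigma> 2" "card X = 4" "finite X"
    using twos by (rule obtain_subset_with_card_n)
  have "int (card (level r \<sigma> 2 - X)) = int (card (level r \<sigma> 2)) - 4"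
    using X by (simp add: card_Diff_subset twos)
  with room have room': "\<sigma> r - 4 \<le> int (card (level r \<sigma> 1)) + 2 * int (card (level r \<sigma> 2 - X))"
    by simp
  have disjoint: "level r \<sigma> 1 \<inter> (level r \<sigma> 2 - X) = {}" by (auto simp: mem_level)
  obtain Q where Q: "Q \<subseteq> level r \<sigma> 1 \<union> (level r \<sigma> 2 - X)" "sum \<sigma> Q = \<sigma> r - 4"
    by (rule obtain_subset_sum_ones_twos[of "level r \<sigma> 1" "level r \<sigma> 2 - X" \<sigma>])
      (use top room' ones(2) disjoint in \<open>simp_all add: finite_level mem_level\<close>)
  then have "Q \<subseteq> {1..r}" "Q \<inter> X = {}" "r \<notin> Q" "\<forall>j\<in>Q. 0 \<le> \<sigma> j"
    using top X(1) by (auto simp: mem_level subset_eq)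
  moreover have "\<sigma> r = 2 * 2 + sum \<sigma> Q" using Q(2) by simp
  moreover have "r \<in> {1..r}" using r by simp
  ultimately show False by (intro no_four_equal_and_double_sum[OF X(1,2)]) simp_all
qed

lemma count_bound_top_three:
  assumes ones: "card (level r \<sigma> 1) \<le> 3" "level r \<sigma> 1 \<noteq> {}" and r: "1 \<le> r" and top: "\<sigma> r = 3"
  shows "card (level r \<sigma> 1) + card (level r \<sigma> 2) \<le> 4"
proof (rule ccontr)
  assume "\<not> ?thesis"
  then have many: "5 \<le> card (level r \<sigma> 1) + card (level r \<sigma> 2)" by simp
  have t: "r \<in> level r \<sigma> 3" using r top by (simp add: mem_level)
  consider "4 \<le> card (level r \<sigma> 2)"
    | "card (level r \<sigma> 1) = 3" "2 \<le> card (level r \<sigma> 2)"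
    | "2 \<le> card (level r \<sigma> 1)" "3 \<le> card (level r \<sigma> 2)"
    using ones(1) many by linarith
  then show False
  proof cases
    case 1
    obtain X where "X \<subseteq> level r \<sigma> 2" "card X = 4" "finite X"
      using 1 by (rule obtain_subset_with_card_n)
    moreover obtain io where "io \<in> level r \<sigma> 1" using ones(2) by blast
    ultimately show False using t by (intro no_four_twos_one_three)
  next
    case 2
    obtain X where "X \<subseteq> level r \<sigma> 2" "card X = 2" "finite X"
      using 2(2) by (rule obtain_subset_with_card_n)
    then show False using 2(1) t by (intro no_two_twos_three_ones_three[OF _ _ subset_refl])
  next
    case 3
    obtain X where "X \<subseteq> level r \<sigma> 1" "card X = 2" "finite X"
      using 3(1) by (rule obtain_subset_with_card_n)
    moreover obtain Y where "Y \<subseteq> level r \<sigma> 2" "card Y = 3" "finite Y"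
      using 3(2) by (rule obtain_subset_with_card_n)
    ultimately show False using t by (intro no_two_ones_three_twos_three)
  qed
qed

lemma count_bound:
  assumes "level r \<sigma> 1 \<noteq> {}" "1 \<le> r" "3 \<le> \<sigma> r"
  shows "2 * int (card (level r \<sigma> 1)) + 2 * int (card (level r \<sigma> 2)) + \<sigma> r * (3 - \<sigma> r) \<le> 8"
proof -
  consider "4 \<le> card (level r \<sigma> 1)" | "card (level r \<sigma> 1) \<le> 3" "4 \<le> \<sigma> r"
    | "card (level r \<sigma> 1) \<le> 3" "\<sigma> r = 3"
    using assms(3) by linarith
  then show ?thesis
  proof cases
    case 1
    then show ?thesis using assms(2,3) by (rule count_bound_many_ones)
  next
    case 2
    then show ?thesis using assms(1,2) count_bound_few_ones by blast
  next
    case 3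
    then have "card (level r \<sigma> 1) + card (level r \<sigma> 2) \<le> 4"
      using assms(1,2) count_bound_top_three by blast
    with 3 show ?thesis by simp
  qed
qed

end

theorem theorem6p1:
  fixes r :: nat and \<sigma> :: "nat \<Rightarrow> int"
  assumes "changemaker r \<sigma>"
    and "\<sigma> r \<ge> 3"
    and "admits_obtuse_superbase r (cm_lattice r \<sigma>)"
  shows "real_of_int (dot r \<sigma> \<sigma>) \<le> 4 + 3/2 * (\<Sum>i=1..r. real_of_int (\<sigma> i * (\<sigma> i - 1)))"
proof -
  obtain k v where "obtuse_superbase r (cm_lattice r \<sigma>) k v"
    using assms(3) unfolding admits_obtuse_superbase_def by blast
  then interpret cm_lattice_obtuse_superbase r \<sigma> k v by unfold_locales
  have r: "1 \<le> r" and "\<sigma> 1 = 1" using assms(1) unfolding changemaker_def by auto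
  then have "1 \<in> level r \<sigma> 1" unfolding level_def by simp
  then have "2 * int (card (level r \<sigma> 1)) + 2 * int (card (level r \<sigma> 2)) + \<sigma> r * (3 - \<sigma> r) \<le> 8"
    using count_bound r assms(2) by blast
  moreover have "(\<Sum>j=1..r. \<sigma> j * (3 - \<sigma> j))
      \<le> 2 * int (card (level r \<sigma> 1)) + 2 * int (card (level r \<sigma> 2)) + \<sigma> r * (3 - \<sigma> r)"
    using changemaker_ge_1[OF assms(1)] r assms(2) by (intro sum_defect_le_counts) auto
  ultimately show ?thesis unfolding changemaker_bound_iff by linarith
qed

end
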